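(* Let $G$ be a group and let $A,B,C$ be nonempty finite subsets of $G$ with $B\subset C$ and $1\in C$. Then either $ABC=AB$ or $|ABC|\geq |A|+|B|$.
   Context: For subsets $X,Y,Z$ of a multiplicative group $G$, $XY=\{xy\mid x\in X,\ y\in Y\}$ and $XYZ=\{xyz\mid x\in X,\ y\in Y,\ z\in Z\}$. *)

theory Defs
  imports "HOL-Algebra.Group"
begin

definition setmul :: "('a, 'b) monoid_scheme \<Rightarrow> 'a set \<Rightarrow> 'a set \<Rightarrow> 'a set" where
  "setmul G X Y = {x \<otimes>\<^bsub>G\<^esub> y | x y. x \<in> X \<and> y \<in> Y}"

definition setmul3 :: "('a, 'b) monoid_scheme \<Rightarrow> 'a set \<Rightarrow> 'a set \<Rightarrow> 'a set \<Rightarrow> 'a set" where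
  "setmul3 G X Y Z = {x \<otimes>\<^bsub>G\<^esub> y \<otimes>\<^bsub>G\<^esub> z | x y z. x \<in> X \<and> y \<in> Y \<and> z \<in> Z}"

end

theory Submission
  imports Defs
begin

(* The proof rests on Kemperman's theorem: if some element a0 b0 of a product set AB of
   finite subsets of a group has a unique representation a b with a \<in> A, b \<in> B, then
   |AB| \<ge> |A| + |B| - 1.
   Kemperman's theorem is proved by an extremal argument.  Among all pairs (A', B') with
   A'B' \<subseteq> AB in which a0 b0 is still uniquely represented, take one maximising
   |A'| + |B'| and then |B'|.  For g = a0\<inverse> a with a b0 = a0 b (a \<in> A', b \<in> B') the two
   transforms (A' \<union> A'g, {y \<in> B'. gy \<in> B'}) and ({x \<in> A'. xg \<in> A'}, B' \<union> gB') are again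
   admissible and their sizes add up to 2(|A'| + |B'|); maximality forces gB' = B', hence
   a = a0.  So A' b0 and a0 B' meet only in a0 b0, giving |A'B'| \<ge> |A'| + |B'| - 1.
   For the main theorem: AB \<subseteq> ABC since 1 \<in> C.  If some a0 b0 c0 \<in> ABC lies outside AB,
   put d = b0 c0 \<notin> B; then a0 d has a unique representation in A(B \<union> {d}) \<subseteq> ABC, and
   Kemperman's theorem yields |ABC| \<ge> |A| + |B \<union> {d}| - 1 = |A| + |B|. *)

text \<open>The element \<open>a0 \<otimes> b0\<close> is represented in \<open>A B\<close> only by the pair \<open>(a0, b0)\<close>
  (in a group the first factor determines the second).\<close>
definition unique_rep :: "('a, 'b) monoid_scheme \<Rightarrow> 'a set \<Rightarrow> 'a set \<Rightarrow> 'a \<Rightarrow> 'a \<Rightarrow> bool" where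
  "unique_rep G A B a0 b0 \<longleftrightarrow> a0 \<in> A \<and> b0 \<in> B \<and>
     (\<forall>a\<in>A. \<forall>b\<in>B. a \<otimes>\<^bsub>G\<^esub> b = a0 \<otimes>\<^bsub>G\<^esub> b0 \<longrightarrow> a = a0)"

lemma setmul_memI: "a \<in> A \<Longrightarrow> b \<in> B \<Longrightarrow> a \<otimes>\<^bsub>G\<^esub> b \<in> setmul G A B"
  unfolding setmul_def by blast

lemma setmul_finite:
  assumes "finite A" "finite B"
  shows "finite (setmul G A B)"
proof -
  have "setmul G A B = (\<lambda>(a, b). a \<otimes>\<^bsub>G\<^esub> b) ` (A \<times> B)"
    unfolding setmul_def by auto
  thus ?thesis using assms by simp
qed

lemma setmul3_finite:
  assumes "finite A" "finite B" "finite C"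
  shows "finite (setmul3 G A B C)"
proof -
  have "setmul3 G A B C = (\<lambda>(a, b, c). a \<otimes>\<^bsub>G\<^esub> b \<otimes>\<^bsub>G\<^esub> c) ` (A \<times> B \<times> C)"
    unfolding setmul3_def by force
  thus ?thesis using assms by simp
qed

text \<open>A translate of a factor lies inside the product, so it bounds the size of that factor.
  This bounds the sizes of the pairs in the extremal argument.\<close>

lemma (in group) card_le_setmul_left:
  assumes "A \<subseteq> carrier G" "finite A" "finite B" "b \<in> B" "b \<in> carrier G"
  shows "card A \<le> card (setmul G A B)"
proof -
  have "inj_on (\<lambda>a. a \<otimes> b) A"
    using inj_on_multc[OF assms(5)] assms(1) inj_on_subset by blast
  then have "card A = card ((\<lambda>a. a \<otimes> b) ` A)" by (simp add: card_image)
  also have "\<dots> \<le> card (setmul G A B)"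
    by (rule card_mono) (use assms setmul_finite setmul_memI in auto)
  finally show ?thesis .
qed

lemma (in group) card_le_setmul_right:
  assumes "B \<subseteq> carrier G" "finite A" "finite B" "a \<in> A" "a \<in> carrier G"
  shows "card B \<le> card (setmul G A B)"
proof -
  have "inj_on (\<lambda>b. a \<otimes> b) B"
    using inj_on_cmult[OF assms(5)] assms(1) inj_on_subset by blast
  then have "card B = card ((\<lambda>b. a \<otimes> b) ` B)" by (simp add: card_image)
  also have "\<dots> \<le> card (setmul G A B)"
    by (rule card_mono) (use assms setmul_finite setmul_memI in auto)
  finally show ?thesis .
qed

lemma card_Un_image_plus_card_stable:
  assumes "finite S" "inj_on f S"
  shows "card (S \<union> f ` S) + card {x \<in> S. f x \<in> S} = 2 * card S"
proof -
  have "f ` {x \<in> S. f x \<in> S} = S \<inter> f ` S" by auto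
  moreover have "inj_on f {x \<in> S. f x \<in> S}" using assms(2) by (rule inj_on_subset) auto
  ultimately have "card {x \<in> S. f x \<in> S} = card (S \<inter> f ` S)" by (metis card_image)
  moreover have "card (S \<union> f ` S) + card (S \<inter> f ` S) = card S + card (f ` S)"
    using card_Un_Int[of S "f ` S"] assms(1) by simp
  ultimately show ?thesis using card_image[OF assms(2)] by simp
qed

lemma (in group) card_setmul_if_translates_meet_once:
  assumes "A \<subseteq> carrier G" "B \<subseteq> carrier G" "finite A" "finite B"
    and "a0 \<in> A" "b0 \<in> B"
    and meet: "\<And>a b. a \<in> A \<Longrightarrow> b \<in> B \<Longrightarrow> a \<otimes> b0 = a0 \<otimes> b \<Longrightarrow> a = a0"
  shows "card A + card B \<le> card (setmul G A B) + 1"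
proof -
  have a0G: "a0 \<in> carrier G" and b0G: "b0 \<in> carrier G" using assms by auto
  define I1 where "I1 = (\<lambda>a. a \<otimes> b0) ` A"
  define I2 where "I2 = (\<lambda>b. a0 \<otimes> b) ` B"
  have "card I1 = card A" unfolding I1_def
    using inj_on_multc[OF b0G] assms(1) by (metis card_image inj_on_subset)
  moreover have "card I2 = card B" unfolding I2_def
    using inj_on_cmult[OF a0G] assms(2) by (metis card_image inj_on_subset)
  moreover have "card (I1 \<inter> I2) \<le> 1"
  proof -
    have "I1 \<inter> I2 \<subseteq> {a0 \<otimes> b0}"
      unfolding I1_def I2_def using meet by blast
    then show ?thesis using card_mono[of "{a0 \<otimes> b0}"] by simp
  qed
  moreover have "card (I1 \<union> I2) \<le> card (setmul G A B)"
    by (rule card_mono) (use assms setmul_finite setmul_memI in \<open>auto simp: I1_def I2_def\<close>)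
  moreover have "card I1 + card I2 = card (I1 \<union> I2) + card (I1 \<inter> I2)"
    using card_Un_Int assms(3,4) unfolding I1_def I2_def by blast
  ultimately show ?thesis by linarith
qed

lemma (in group) transform_enlarge_left:
  assumes AG: "A \<subseteq> carrier G" and BG: "B \<subseteq> carrier G" and gG: "g \<in> carrier G"
    and u: "unique_rep G A B a0 b0" and a0g: "a0 \<otimes> g \<in> A" and gb0: "g \<otimes> b0 \<in> B"
  shows "setmul G (A \<union> (\<lambda>x. x \<otimes> g) ` A) {y \<in> B. g \<otimes> y \<in> B} \<subseteq> setmul G A B"
    and "unique_rep G (A \<union> (\<lambda>x. x \<otimes> g) ` A) {y \<in> B. g \<otimes> y \<in> B} a0 b0"
proof -
  have a0G: "a0 \<in> carrier G" and b0G: "b0 \<in> carrier G" using u AG BG unfolding unique_rep_def by auto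
  have shift: "x \<otimes> g \<otimes> y = x \<otimes> (g \<otimes> y)" if "x \<in> A" "y \<in> B" for x y
    using that AG BG gG by (meson m_assoc subsetD)
  show "setmul G (A \<union> (\<lambda>x. x \<otimes> g) ` A) {y \<in> B. g \<otimes> y \<in> B} \<subseteq> setmul G A B"
    unfolding setmul_def using shift by fastforce
  have "x = a0" if x: "x \<in> A \<union> (\<lambda>x. x \<otimes> g) ` A" and y: "y \<in> B" "g \<otimes> y \<in> B"
    and e: "x \<otimes> y = a0 \<otimes> b0" for x y
  proof (cases "x \<in> A")
    case True
    then show ?thesis using u y e unfolding unique_rep_def by blast
  next
    case False
    then obtain x' where x': "x' \<in> A" "x = x' \<otimes> g" using x by blast
    then have "x' \<otimes> (g \<otimes> y) = a0 \<otimes> b0" using e shift y by simp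
    then have "x' = a0" using u x' y unfolding unique_rep_def by blast
    then have "g \<otimes> y = b0"
      using \<open>x' \<otimes> (g \<otimes> y) = a0 \<otimes> b0\<close> a0G gG y BG b0G by (metis Units_eq Units_l_cancel m_closed subsetD)
    then have "(a0 \<otimes> g) \<otimes> y = a0 \<otimes> b0" using a0G gG y BG by (metis m_assoc subsetD)
    then have "a0 \<otimes> g = a0" using u a0g y unfolding unique_rep_def by blast
    then show ?thesis using x' \<open>x' = a0\<close> by simp
  qed
  then show "unique_rep G (A \<union> (\<lambda>x. x \<otimes> g) ` A) {y \<in> B. g \<otimes> y \<in> B} a0 b0"
    using u gb0 unfolding unique_rep_def by auto
qed

lemma (in group) transform_enlarge_right:
  assumes AG: "A \<subseteq> carrier G" and BG: "B \<subseteq> carrier G" and gG: "g \<in> carrier G"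
    and u: "unique_rep G A B a0 b0" and a0g: "a0 \<otimes> g \<in> A" and gb0: "g \<otimes> b0 \<in> B"
  shows "setmul G {x \<in> A. x \<otimes> g \<in> A} (B \<union> (\<lambda>y. g \<otimes> y) ` B) \<subseteq> setmul G A B"
    and "unique_rep G {x \<in> A. x \<otimes> g \<in> A} (B \<union> (\<lambda>y. g \<otimes> y) ` B) a0 b0"
proof -
  have b0G: "b0 \<in> carrier G" using u BG unfolding unique_rep_def by auto
  have shift: "x \<otimes> (g \<otimes> y) = x \<otimes> g \<otimes> y" if "x \<in> A" "y \<in> B" for x y
    using that AG BG gG by (metis m_assoc subsetD)
  show "setmul G {x \<in> A. x \<otimes> g \<in> A} (B \<union> (\<lambda>y. g \<otimes> y) ` B) \<subseteq> setmul G A B"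
    unfolding setmul_def using shift by fastforce
  have "x = a0" if x: "x \<in> A" "x \<otimes> g \<in> A" and y: "y \<in> B \<union> (\<lambda>y. g \<otimes> y) ` B"
    and e: "x \<otimes> y = a0 \<otimes> b0" for x y
  proof (cases "y \<in> B")
    case True
    then show ?thesis using u x e unfolding unique_rep_def by blast
  next
    case False
    then obtain y' where y': "y' \<in> B" "y = g \<otimes> y'" using y by blast
    then have "(x \<otimes> g) \<otimes> y' = a0 \<otimes> b0" using e shift x by simp
    then have "x \<otimes> g = a0" using u x y' unfolding unique_rep_def by blast
    then have "x \<otimes> (g \<otimes> b0) = a0 \<otimes> b0" using x AG gG b0G by (metis m_assoc subsetD)
    then show ?thesis using u x gb0 unfolding unique_rep_def by blast
  qed
  then show "unique_rep G {x \<in> A. x \<otimes> g \<in> A} (B \<union> (\<lambda>y. g \<otimes> y) ` B) a0 b0"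
    using u a0g unfolding unique_rep_def by auto
qed

lemma (in group) extremal_pair_translates_meet_once:
  assumes A1: "A1 \<subseteq> carrier G" "finite A1" and B1: "B1 \<subseteq> carrier G" "finite B1"
    and u1: "unique_rep G A1 B1 a0 b0"
    and unbeaten: "\<And>A' B'. A' \<subseteq> carrier G \<Longrightarrow> B' \<subseteq> carrier G \<Longrightarrow> finite A' \<Longrightarrow> finite B'
      \<Longrightarrow> unique_rep G A' B' a0 b0 \<Longrightarrow> setmul G A' B' \<subseteq> setmul G A1 B1
      \<Longrightarrow> card A' + card B' \<le> card A1 + card B1"
    and unbeaten_right: "\<And>A' B'. A' \<subseteq> carrier G \<Longrightarrow> B' \<subseteq> carrier G \<Longrightarrow> finite A' \<Longrightarrow> finite B'
      \<Longrightarrow> unique_rep G A' B' a0 b0 \<Longrightarrow> setmul G A' B' \<subseteq> setmul G A1 B1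
      \<Longrightarrow> card A' + card B' = card A1 + card B1 \<Longrightarrow> card B' \<le> card B1"
    and a: "a \<in> A1" and b: "b \<in> B1" and e: "a \<otimes> b0 = a0 \<otimes> b"
  shows "a = a0"
proof -
  have a0G: "a0 \<in> carrier G" and b0G: "b0 \<in> carrier G"
    using u1 A1 B1 unfolding unique_rep_def by auto
  define g where "g = inv a0 \<otimes> a"
  have aG: "a \<in> carrier G" and bG: "b \<in> carrier G" using a b A1 B1 by auto
  have gG: "g \<in> carrier G" unfolding g_def using aG a0G by simp
  have a0g: "a0 \<otimes> g = a" unfolding g_def using aG a0G by (simp add: m_assoc[symmetric])
  have "g \<otimes> b0 = inv a0 \<otimes> (a \<otimes> b0)" unfolding g_def using aG a0G b0G by (simp add: m_assoc)
  also have "\<dots> = b" unfolding e using a0G bG by (simp add: m_assoc[symmetric])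
  finally have gb0: "g \<otimes> b0 = b" .
  have inj_left_g: "inj_on (\<lambda>y. g \<otimes> y) B1" using inj_on_cmult[OF gG] B1(1) by (rule inj_on_subset)
  note trans1 = transform_enlarge_left[OF A1(1) B1(1) gG u1, unfolded a0g gb0, OF a b]
  note trans2 = transform_enlarge_right[OF A1(1) B1(1) gG u1, unfolded a0g gb0, OF a b]
  have "card (A1 \<union> (\<lambda>x. x \<otimes> g) ` A1) + card {y \<in> B1. g \<otimes> y \<in> B1} \<le> card A1 + card B1"
    by (rule unbeaten) (use trans1 A1 B1 gG in auto)
  moreover have "card {x \<in> A1. x \<otimes> g \<in> A1} + card (B1 \<union> (\<lambda>y. g \<otimes> y) ` B1) \<le> card A1 + card B1"
    by (rule unbeaten) (use trans2 A1 B1 gG in auto)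
  moreover have "card (A1 \<union> (\<lambda>x. x \<otimes> g) ` A1) + card {x \<in> A1. x \<otimes> g \<in> A1} = 2 * card A1"
    using card_Un_image_plus_card_stable[OF A1(2) inj_on_subset[OF inj_on_multc[OF gG] A1(1)]] .
  moreover have "card (B1 \<union> (\<lambda>y. g \<otimes> y) ` B1) + card {y \<in> B1. g \<otimes> y \<in> B1} = 2 * card B1"
    using card_Un_image_plus_card_stable[OF B1(2) inj_left_g] .
  \<comment> \<open>both transforms are competitors, and their sizes sum to twice the maximum\<close>
  ultimately have tie: "card {x \<in> A1. x \<otimes> g \<in> A1} + card (B1 \<union> (\<lambda>y. g \<otimes> y) ` B1)
      = card A1 + card B1"
    by linarith
  have "card (B1 \<union> (\<lambda>y. g \<otimes> y) ` B1) \<le> card B1"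
    by (rule unbeaten_right[OF _ _ _ _ _ _ tie]) (use trans2 A1 B1 gG in auto)
  \<comment> \<open>so \<open>gB1 = B1\<close>, and \<open>b0 = g y\<close> for some \<open>y \<in> B1\<close>, i.e. \<open>a y = a0 b0\<close>\<close>
  then have "B1 = B1 \<union> (\<lambda>y. g \<otimes> y) ` B1"
    by (intro card_seteq) (use B1 in auto)
  then have into: "(\<lambda>y. g \<otimes> y) ` B1 \<subseteq> B1" by blast
  have "(\<lambda>y. g \<otimes> y) ` B1 = B1"
    using card_subset_eq[OF B1(2) into] card_image[OF inj_left_g] by simp
  moreover have "b0 \<in> B1" using u1 unfolding unique_rep_def by blast
  ultimately obtain y where y: "y \<in> B1" "b0 = g \<otimes> y" by blast
  then have "a \<otimes> y = a0 \<otimes> b0"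
    using a0g gG a0G \<open>y \<in> B1\<close> B1(1) by (auto simp: m_assoc)
  then show "a = a0" using u1 a y(1) unfolding unique_rep_def by blast
qed

lemma (in group) extremal_pair_exists:
  assumes "A \<subseteq> carrier G" "B \<subseteq> carrier G" "finite A" "finite B"
    and "unique_rep G A B a0 b0"
  obtains A1 B1 where "A1 \<subseteq> carrier G" "finite A1" "B1 \<subseteq> carrier G" "finite B1"
    "unique_rep G A1 B1 a0 b0" "setmul G A1 B1 \<subseteq> setmul G A B"
    "card A + card B \<le> card A1 + card B1"
    "\<And>A' B'. A' \<subseteq> carrier G \<Longrightarrow> B' \<subseteq> carrier G \<Longrightarrow> finite A' \<Longrightarrow> finite B'
      \<Longrightarrow> unique_rep G A' B' a0 b0 \<Longrightarrow> setmul G A' B' \<subseteq> setmul G A1 B1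
      \<Longrightarrow> card A' + card B' \<le> card A1 + card B1"
    "\<And>A' B'. A' \<subseteq> carrier G \<Longrightarrow> B' \<subseteq> carrier G \<Longrightarrow> finite A' \<Longrightarrow> finite B'
      \<Longrightarrow> unique_rep G A' B' a0 b0 \<Longrightarrow> setmul G A' B' \<subseteq> setmul G A1 B1
      \<Longrightarrow> card A' + card B' = card A1 + card B1 \<Longrightarrow> card B' \<le> card B1"
proof -
  define X where "X = setmul G A B"
  have fX: "finite X" unfolding X_def using setmul_finite assms by blast
  have a0G: "a0 \<in> carrier G" and b0G: "b0 \<in> carrier G"
    using assms unfolding unique_rep_def by auto
  define adm where "adm = (\<lambda>(A', B'). A' \<subseteq> carrier G \<and> B' \<subseteq> carrier G \<and> finite A' \<and> finite B'
     \<and> unique_rep G A' B' a0 b0 \<and> setmul G A' B' \<subseteq> X)"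
  have bounded: "card (fst p) + card (snd p) < 2 * card X + 1" "card (snd p) < card X + 1"
    if "adm p" for p
  proof -
    from that have p: "fst p \<subseteq> carrier G" "snd p \<subseteq> carrier G" "finite (fst p)" "finite (snd p)"
      "a0 \<in> fst p" "b0 \<in> snd p" "setmul G (fst p) (snd p) \<subseteq> X"
      unfolding adm_def unique_rep_def by auto
    have "card (setmul G (fst p) (snd p)) \<le> card X" using card_mono[OF fX p(7)] .
    then show "card (fst p) + card (snd p) < 2 * card X + 1" "card (snd p) < card X + 1"
      using card_le_setmul_left[OF p(1,3,4,6) b0G] card_le_setmul_right[OF p(2,3,4,5) a0G]
      by linarith+
  qed
  have admAB: "adm (A, B)" unfolding adm_def X_def using assms by auto
  have "\<exists>q. adm q \<and> (\<forall>p. adm p \<longrightarrow> card (fst p) + card (snd p) \<le> card (fst q) + card (snd q))"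
    by (rule ex_has_greatest_nat[of _ "(A, B)" _ "2 * card X + 1"]) (use admAB bounded in auto)
  then obtain q where q: "adm q" "\<And>p. adm p \<Longrightarrow> card (fst p) + card (snd p) \<le> card (fst q) + card (snd q)"
    by blast
  have "\<exists>p. (adm p \<and> card (fst p) + card (snd p) = card (fst q) + card (snd q))
      \<and> (\<forall>p'. adm p' \<and> card (fst p') + card (snd p') = card (fst q) + card (snd q)
           \<longrightarrow> card (snd p') \<le> card (snd p))"
    by (rule ex_has_greatest_nat[of _ q _ "card X + 1"]) (use q(1) bounded in auto)
  then obtain A1 B1 where m: "adm (A1, B1)" "card A1 + card B1 = card (fst q) + card (snd q)"
    "\<And>A' B'. adm (A', B') \<Longrightarrow> card A' + card B' = card A1 + card B1 \<Longrightarrow> card B' \<le> card B1"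
    by fastforce
  have max_sum: "card A' + card B' \<le> card A1 + card B1" if "adm (A', B')" for A' B'
    using q(2)[of "(A', B')"] that m(2) by simp
  have X1: "setmul G A1 B1 \<subseteq> X" using m(1) unfolding adm_def by auto
  show thesis
  proof (rule that)
    show "A1 \<subseteq> carrier G" "finite A1" "B1 \<subseteq> carrier G" "finite B1" "unique_rep G A1 B1 a0 b0"
      "setmul G A1 B1 \<subseteq> setmul G A B"
      using m(1) unfolding adm_def X_def by auto
    show "card A + card B \<le> card A1 + card B1" using max_sum[OF admAB] .
  next
    fix A' B' assume "A' \<subseteq> carrier G" "B' \<subseteq> carrier G" "finite A'" "finite B'"
      "unique_rep G A' B' a0 b0" "setmul G A' B' \<subseteq> setmul G A1 B1"
    then have adm': "adm (A', B')" using X1 unfolding adm_def by auto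
    show "card A' + card B' \<le> card A1 + card B1" using max_sum[OF adm'] .
    show "card B' \<le> card B1" if "card A' + card B' = card A1 + card B1" using m(3)[OF adm' that] .
  qed
qed

lemma (in group) kemperman:
  assumes "A \<subseteq> carrier G" "B \<subseteq> carrier G" "finite A" "finite B"
    and "unique_rep G A B a0 b0"
  shows "card A + card B \<le> card (setmul G A B) + 1"
proof -
  obtain A1 B1 where A1: "A1 \<subseteq> carrier G" "finite A1" and B1: "B1 \<subseteq> carrier G" "finite B1"
    and u1: "unique_rep G A1 B1 a0 b0" and sub: "setmul G A1 B1 \<subseteq> setmul G A B"
    and larger: "card A + card B \<le> card A1 + card B1"
    and unbeaten: "\<And>A' B'. A' \<subseteq> carrier G \<Longrightarrow> B' \<subseteq> carrier G \<Longrightarrow> finite A' \<Longrightarrow> finite B'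
      \<Longrightarrow> unique_rep G A' B' a0 b0 \<Longrightarrow> setmul G A' B' \<subseteq> setmul G A1 B1
      \<Longrightarrow> card A' + card B' \<le> card A1 + card B1"
    and unbeaten_right: "\<And>A' B'. A' \<subseteq> carrier G \<Longrightarrow> B' \<subseteq> carrier G \<Longrightarrow> finite A' \<Longrightarrow> finite B'
      \<Longrightarrow> unique_rep G A' B' a0 b0 \<Longrightarrow> setmul G A' B' \<subseteq> setmul G A1 B1
      \<Longrightarrow> card A' + card B' = card A1 + card B1 \<Longrightarrow> card B' \<le> card B1"
    by (rule extremal_pair_exists[OF assms]) (rule that)
  note larger
  also have "card A1 + card B1 \<le> card (setmul G A1 B1) + 1"
  proof (rule card_setmul_if_translates_meet_once[OF A1(1) B1(1) A1(2) B1(2)])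
    show "a0 \<in> A1" "b0 \<in> B1" using u1 unfolding unique_rep_def by auto
    show "a = a0" if "a \<in> A1" "b \<in> B1" "a \<otimes> b0 = a0 \<otimes> b" for a b
      by (rule extremal_pair_translates_meet_once[OF A1 B1 u1 unbeaten unbeaten_right that])
  qed
  also have "\<dots> \<le> card (setmul G A B) + 1"
    using card_mono[OF setmul_finite[OF assms(3,4)] sub] by simp
  finally show ?thesis .
qed

lemma (in group) unique_rep_insert:
  assumes "A \<subseteq> carrier G" "a0 \<in> A" "d \<in> carrier G" "a0 \<otimes> d \<notin> setmul G A B"
  shows "unique_rep G A (insert d B) a0 d"
  unfolding unique_rep_def
proof (intro conjI insertI1 ballI impI)
  fix a b assume a: "a \<in> A" and b: "b \<in> insert d B" and e: "a \<otimes> b = a0 \<otimes> d"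
  have "b = d"
  proof (rule ccontr)
    assume "b \<noteq> d"
    then have "a0 \<otimes> d \<in> setmul G A B" using a b e setmul_memI[of a A b B G] by auto
    then show False using assms(4) by contradiction
  qed
  then show "a = a0" using e a assms(1-3) by (metis right_cancel subsetD)
qed (use assms(2) in simp)

lemma (in group) setmul_subset_setmul3:
  assumes "A \<subseteq> carrier G" "B \<subseteq> carrier G" "\<one> \<in> C"
  shows "setmul G A B \<subseteq> setmul3 G A B C"
proof
  fix z assume "z \<in> setmul G A B"
  then obtain a b where ab: "a \<in> A" "b \<in> B" "z = a \<otimes> b" unfolding setmul_def by blast
  then have "z = a \<otimes> b \<otimes> \<one>" using assms by (simp add: subset_iff)
  then show "z \<in> setmul3 G A B C" using ab assms(3) unfolding setmul3_def by blast
qed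

theorem mainTheorem1:
  fixes G (structure)
  assumes "group G"
    and "A \<subseteq> carrier G" and "B \<subseteq> carrier G" and "C \<subseteq> carrier G"
    and "finite A" and "finite B" and "finite C"
    and "A \<noteq> {}" and "B \<noteq> {}" and "C \<noteq> {}"
    and "B \<subseteq> C" and "\<one> \<in> C"
  shows "setmul3 G A B C = setmul G A B \<or> card (setmul3 G A B C) \<ge> card A + card B"
proof (cases "setmul3 G A B C = setmul G A B")
  case False
  interpret group G by fact
  have AB_sub: "setmul G A B \<subseteq> setmul3 G A B C"
    using setmul_subset_setmul3 assms by blast
  with False obtain z where "z \<in> setmul3 G A B C" "z \<notin> setmul G A B" by blast
  then obtain a0 b0 c0 where abc: "a0 \<in> A" "b0 \<in> B" "c0 \<in> C"
    and new: "a0 \<otimes> b0 \<otimes> c0 \<notin> setmul G A B"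
    unfolding setmul3_def by blast
  define d where "d = b0 \<otimes> c0"
  have dG: "d \<in> carrier G" unfolding d_def using abc assms by auto
  have a0d: "a0 \<otimes> d \<notin> setmul G A B"
    using new abc assms unfolding d_def by (metis m_assoc subsetD)
  then have "d \<notin> B" using abc(1) setmul_memI by metis
  then have "card A + card B + 1 = card A + card (insert d B)" using assms(6) by simp
  also have "\<dots> \<le> card (setmul G A (insert d B)) + 1"
    using kemperman unique_rep_insert[OF assms(2) abc(1) dG a0d] assms dG by simp
  also have "\<dots> \<le> card (setmul3 G A B C) + 1"
  proof -
    have "a \<otimes> d \<in> setmul3 G A B C" if "a \<in> A" for a
      using that abc assms unfolding d_def setmul3_def by (force simp: m_assoc)
    then have "setmul G A (insert d B) \<subseteq> setmul3 G A B C"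
      using AB_sub unfolding setmul_def by blast
    then show ?thesis using card_mono setmul3_finite assms(5-7) by (metis add_le_mono1)
  qed
  finally show ?thesis by simp
qed simp

end
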